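(* Let $\Lambda_1,\Lambda_2\subset\mathbb{R}^d$ be almost-orthogonal planes, and let $v$ be a vector whose angle with each of $\Lambda_1$ and $\Lambda_2$ is at most $\alpha$, for some $0<\alpha\le\frac13$. Then the angle between $v$ and $\Lambda_1\cap\Lambda_2$ is at most $10\alpha$.
   Context: Planes are affine subspaces. The angle between a vector $v$ and a plane $\Lambda$ is the infimum of the angles between $v$ and vectors $w\in\Lambda-\Lambda$. Two planes $\Lambda_1,\Lambda_2\subset\mathbb{R}^d$ are almost-orthogonal if there is a basis $\{v_1,\dots,v_d\}$ of $\mathbb{R}^d$ and integers $0\le a\le b\le c\le d$ such that $v_1,\dots,v_b$ form an orthonormal basis of (the direction space of) $\Lambda_1$, $v_{a+1},\dots,v_c$ form an orthonormal basis of (the direction space of) $\Lambda_2$, every vector in the span of $\{v_1,\dots,v_a\}$ makes an angle in $[\pi/2-0.01,\pi/2+0.01]$ with $\Lambda_2$, and every vector in the span of $\{v_{b+1},\dots,v_d\}$ makes an angle in $[\pi/2-0.01,\pi/2+0.01]$ with $\Lambda_1$. *)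

theory Defs
  imports "HOL-Analysis.Analysis" "HOL-Library.Extended_Real"
begin

definition vec_angle :: "'a::euclidean_space \<Rightarrow> 'a \<Rightarrow> real" where
  "vec_angle u w = arccos ((u \<bullet> w) / (norm u * norm w))"

definition is_plane :: "'a::euclidean_space set \<Rightarrow> bool" where
  "is_plane L \<longleftrightarrow> affine L \<and> L \<noteq> {}"

definition dir :: "'a::euclidean_space set \<Rightarrow> 'a set" where
  "dir L = {x - y | x y. x \<in> L \<and> y \<in> L}"

(* angle between a vector and a plane: infimum of angles with nonzero w in L - L
   (extended real; infimum over the empty set is +infinity) *)
definition plane_angle :: "'a::euclidean_space \<Rightarrow> 'a set \<Rightarrow> ereal" where
  "plane_angle v L = Inf ((\<lambda>w. ereal (vec_angle v w)) ` (dir L - {0}))"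

definition orthonormal_basis_of :: "(nat \<Rightarrow> 'a::euclidean_space) \<Rightarrow> nat set \<Rightarrow> 'a set \<Rightarrow> bool" where
  "orthonormal_basis_of vs I S \<longleftrightarrow>
     (\<forall>i\<in>I. norm (vs i) = 1) \<and> (\<forall>i\<in>I. \<forall>j\<in>I. i \<noteq> j \<longrightarrow> vs i \<bullet> vs j = 0) \<and>
     span (vs ` I) = S"

definition near_perp :: "ereal \<Rightarrow> bool" where
  "near_perp t \<longleftrightarrow> ereal (pi/2 - 0.01) \<le> t \<and> t \<le> ereal (pi/2 + 0.01)"

(* Almost-orthogonal planes. The basis v_1..v_d is vs 0 .. vs (d-1) (0-based indices):
   v_1..v_b = vs ` {..<b}, v_{a+1}..v_c = vs ` {a..<c}, v_{b+1}..v_d = vs ` {b..<d}. *)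
definition almost_orthogonal :: "'a::euclidean_space set \<Rightarrow> 'a set \<Rightarrow> bool" where
  "almost_orthogonal L1 L2 \<longleftrightarrow>
     (\<exists>vs :: nat \<Rightarrow> 'a. \<exists>a b c :: nat.
        inj_on vs {..<DIM('a)} \<and> independent (vs ` {..<DIM('a)}) \<and>
        span (vs ` {..<DIM('a)}) = UNIV \<and>
        a \<le> b \<and> b \<le> c \<and> c \<le> DIM('a) \<and>
        orthonormal_basis_of vs {..<b} (dir L1) \<and>
        orthonormal_basis_of vs {a..<c} (dir L2) \<and>
        (\<forall>u\<in>span (vs ` {..<a}). u \<noteq> 0 \<longrightarrow> near_perp (plane_angle u L2)) \<and>
        (\<forall>u\<in>span (vs ` {b..<DIM('a)}). u \<noteq> 0 \<longrightarrow> near_perp (plane_angle u L1)))"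

end

theory Submission
  imports Defs
begin

(* Let p1 and p2 be the orthogonal projections of v onto the direction spaces U and W of the two
   planes; the angle hypotheses give |v - p_i| <= sin alpha |v|. Split p1 = x + m along the
   almost-orthogonal basis, with m in both U and W and x in the span of the basis vectors of U that
   are nearly perpendicular to W. Since p2 - m lies in W, near-perpendicularity yields
   0.99 |x| <= |x - (p2 - m)| <= |v - p1| + |v - p2|, so x is small and, by Pythagoras,
   |v - m| <= 2.3 alpha |v|. Finally m is a direction of the intersection, and the angle between
   v and m is at most twice the relative distance |v - m| / |v|. *)

lemma dir_affine_eq:
  assumes "affine L" "a \<in> L"
  shows "dir L = (\<lambda>x. x - a) ` L"
proof
  show "dir L \<subseteq> (\<lambda>x. x - a) ` L"
  proof
    fix d assume "d \<in> dir L"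
    then obtain y z where "y \<in> L" "z \<in> L" "d = y - z" unfolding dir_def by blast
    then have "a + 1 *\<^sub>R (y - z) \<in> L" using mem_affine_3_minus[OF assms] by blast
    then show "d \<in> (\<lambda>x. x - a) ` L" using \<open>d = y - z\<close> by (intro image_eqI[of _ _ "a + d"]) auto
  qed
qed (use assms in \<open>auto simp: dir_def\<close>)

lemma subspace_dir: "is_plane L \<Longrightarrow> subspace (dir L)"
  unfolding is_plane_def using dir_affine_eq affine_diffs_subspace_subtract by fastforce

lemma dir_Int:
  assumes "affine L1" "affine L2" "L1 \<inter> L2 \<noteq> {}"
  shows "dir (L1 \<inter> L2) = dir L1 \<inter> dir L2"
proof -
  obtain a where "a \<in> L1 \<inter> L2" using assms(3) by blast
  moreover have "inj (\<lambda>x. x - a)" by (simp add: inj_def)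
  ultimately show ?thesis
    using assms dir_affine_eq[of "L1 \<inter> L2" a] dir_affine_eq[of L1 a] dir_affine_eq[of L2 a]
    by (simp add: affine_Int image_Int)
qed

lemma orthogonal_projection_exists:
  fixes v :: "'a::euclidean_space"
  assumes "subspace S"
  obtains p where "p \<in> S" "\<forall>w\<in>S. (v - p) \<bullet> w = 0"
proof -
  obtain p q where "p \<in> span S" "\<And>w. w \<in> span S \<Longrightarrow> orthogonal q w" "v = p + q"
    using orthogonal_subspace_decomp_exists by blast
  moreover have "span S = S" using assms by (simp add: span_eq_iff)
  ultimately show ?thesis using that[of p] by (auto simp: orthogonal_def)
qed

lemma projection_pythagoras:
  fixes v p :: "'a::euclidean_space"
  assumes "p \<in> S" "\<forall>w\<in>S. (v - p) \<bullet> w = 0"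
  shows "norm v ^ 2 = norm p ^ 2 + norm (v - p) ^ 2"
  using norm_add_Pythagorean[of p "v - p"] assms by (simp add: orthogonal_def inner_commute)

lemma projection_norm_le:
  fixes v p :: "'a::euclidean_space"
  assumes "p \<in> S" "\<forall>w\<in>S. (v - p) \<bullet> w = 0"
  shows "norm p \<le> norm v" "norm (v - p) \<le> norm v"
proof -
  have "(norm p)\<^sup>2 \<le> (norm v)\<^sup>2" "(norm (v - p))\<^sup>2 \<le> (norm v)\<^sup>2"
    using projection_pythagoras[OF assms] by simp_all
  then show "norm p \<le> norm v" "norm (v - p) \<le> norm v"
    using power2_le_imp_le norm_ge_zero by blast+
qed

lemma plane_angle_le_vec_angle:
  "w \<in> dir L \<Longrightarrow> w \<noteq> 0 \<Longrightarrow> plane_angle v L \<le> ereal (vec_angle v w)"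
  unfolding plane_angle_def by (rule INF_lower) auto

lemma plane_angle_eq_arccos_projection:
  fixes v p :: "'a::euclidean_space"
  assumes "v \<noteq> 0" "p \<in> dir L" "\<forall>w\<in>dir L. (v - p) \<bullet> w = 0" "dir L \<noteq> {0}"
  shows "plane_angle v L = ereal (arccos (norm p / norm v))"
proof (rule antisym)
  have "norm p \<le> norm v" using projection_norm_le(1)[OF assms(2,3)] .
  have vw: "v \<bullet> w = p \<bullet> w" if "w \<in> dir L" for w
    using assms(3) that by (simp add: inner_diff_left)
  show "ereal (arccos (norm p / norm v)) \<le> plane_angle v L"
    unfolding plane_angle_def
  proof (rule INF_greatest)
    fix w assume w: "w \<in> dir L - {0}"
    have "\<bar>v \<bullet> w\<bar> \<le> norm v * norm w" by (rule Cauchy_Schwarz_ineq2)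
    then have "-1 \<le> (v \<bullet> w) / (norm v * norm w)"
      using w assms(1) by (simp add: field_simps abs_le_iff)
    moreover have "(v \<bullet> w) / (norm v * norm w) \<le> norm p / norm v"
      using norm_cauchy_schwarz[of p w] vw w assms(1) by (simp add: field_simps)
    moreover have "norm p / norm v \<le> 1" using \<open>norm p \<le> norm v\<close> assms(1) by simp
    ultimately show "ereal (arccos (norm p / norm v)) \<le> ereal (vec_angle v w)"
      unfolding vec_angle_def by (simp add: arccos_le_arccos)
  qed
  obtain w where w: "w \<in> dir L" "w \<noteq> 0" "vec_angle v w = arccos (norm p / norm v)"
  proof (cases "p = 0")
    case True
    obtain w where "w \<in> dir L" "w \<noteq> 0" using assms(2,4) by blast
    then show ?thesis using that vw True by (simp add: vec_angle_def)
  next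
    case False
    have "(v \<bullet> p) / (norm v * norm p) = norm p / norm v"
      using vw[OF assms(2)] False by (simp add: power2_norm_eq_inner[symmetric] power2_eq_square)
    then show ?thesis using that[OF assms(2) False] by (simp add: vec_angle_def)
  qed
  show "plane_angle v L \<le> ereal (arccos (norm p / norm v))"
    using plane_angle_le_vec_angle[of w L v] w by simp
qed

lemma plane_angle_le_imp_dist_projection:
  fixes v p :: "'a::euclidean_space"
  assumes "v \<noteq> 0" "p \<in> dir L" "\<forall>w\<in>dir L. (v - p) \<bullet> w = 0"
    and "plane_angle v L \<le> ereal \<alpha>" "\<alpha> \<le> pi/2"
  shows "norm (v - p) \<le> sin \<alpha> * norm v"
proof -
  have "dir L \<noteq> {0}"
  proof
    assume "dir L = {0}"
    then have "plane_angle v L = \<infinity>" by (simp add: plane_angle_def top_ereal_def)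
    with assms(4) show False by simp
  qed
  define t where "t = norm p / norm v"
  have t: "-1 \<le> t" "t \<le> 1"
    using projection_norm_le(1)[OF assms(2,3)] assms(1) by (auto simp: t_def intro: order_trans[of _ 0])
  have "arccos t \<le> \<alpha>"
    using plane_angle_eq_arccos_projection[OF assms(1-3) \<open>dir L \<noteq> {0}\<close>] assms(4) by (simp add: t_def)
  moreover have "0 \<le> arccos t" using arccos_bounded[OF t] by simp
  ultimately have "0 \<le> \<alpha>" by linarith
  have "cos \<alpha> \<le> cos (arccos t)"
    using \<open>arccos t \<le> \<alpha>\<close> \<open>0 \<le> arccos t\<close> assms(5) pi_gt3 by (intro cos_monotone_0_pi_le) auto
  then have "cos \<alpha> \<le> t" using cos_arccos[OF t] by simp
  then have "cos \<alpha> * norm v \<le> norm p" using assms(1) by (simp add: t_def field_simps)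
  moreover have "0 \<le> cos \<alpha> * norm v" using \<open>0 \<le> \<alpha>\<close> assms(5) by (simp add: cos_ge_zero)
  ultimately have "(cos \<alpha> * norm v) ^ 2 \<le> norm p ^ 2" by (rule power_mono)
  then have "norm (v - p) ^ 2 \<le> (sin \<alpha> * norm v) ^ 2"
    using projection_pythagoras[OF assms(2,3)] by (simp add: power_mult_distrib sin_squared_eq algebra_simps)
  moreover have "0 \<le> sin \<alpha> * norm v" using \<open>0 \<le> \<alpha>\<close> assms(5) pi_gt3 by (simp add: sin_ge_zero)
  ultimately show ?thesis by (rule power2_le_imp_le)
qed

lemma plane_angle_ge_imp_norm_projection:
  fixes v p :: "'a::euclidean_space"
  assumes "v \<noteq> 0" "p \<in> dir L" "\<forall>w\<in>dir L. (v - p) \<bullet> w = 0"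
    and "ereal (pi/2 - \<beta>) \<le> plane_angle v L" "0 \<le> \<beta>" "\<beta> \<le> pi/2"
  shows "norm p \<le> sin \<beta> * norm v"
proof (cases "dir L = {0}")
  case True
  moreover have "0 \<le> sin \<beta>" using assms(5,6) pi_gt3 by (intro sin_ge_zero) auto
  ultimately show ?thesis using assms(2) by simp
next
  case False
  define t where "t = norm p / norm v"
  have t: "-1 \<le> t" "t \<le> 1"
    using projection_norm_le(1)[OF assms(2,3)] assms(1) by (auto simp: t_def intro: order_trans[of _ 0])
  have "pi/2 - \<beta> \<le> arccos t"
    using plane_angle_eq_arccos_projection[OF assms(1-3) False] assms(4) by (simp add: t_def)
  then have "cos (arccos t) \<le> cos (pi/2 - \<beta>)"
    using arccos_bounded[OF t] assms(6) by (intro cos_monotone_0_pi_le) auto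
  then have "t \<le> cos (pi/2 - \<beta>)" using cos_arccos[OF t] by simp
  then show ?thesis using assms(1) by (simp add: t_def sin_cos_eq field_simps)
qed

lemma near_perp_imp_dist_ge:
  fixes x w :: "'a::euclidean_space"
  assumes "subspace (dir L)" "near_perp (plane_angle x L)" "w \<in> dir L"
  shows "0.99 * norm x \<le> norm (x - w)"
proof (cases "x = 0")
  case True
  then show ?thesis by simp
next
  case False
  obtain q where q: "q \<in> dir L" "\<forall>u\<in>dir L. (x - q) \<bullet> u = 0"
    using orthogonal_projection_exists[OF assms(1)] by blast
  have "norm q \<le> sin 0.01 * norm x"
    using plane_angle_ge_imp_norm_projection[OF False q] assms(2) pi_gt3 by (simp add: near_perp_def)
  also have "\<dots> \<le> 0.01 * norm x" using sin_x_le_x[of "0.01"] by (rule mult_right_mono) auto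
  finally have "norm q \<le> 0.01 * norm x" .
  moreover have "norm (x - q) \<le> norm (x - w)"
  proof -
    have "q - w \<in> dir L" using q(1) assms(1,3) by (simp add: subspace_diff)
    moreover have "\<forall>u\<in>dir L. ((x - w) - (q - w)) \<bullet> u = 0" using q(2) by simp
    ultimately have "norm ((x - w) - (q - w)) \<le> norm (x - w)" by (rule projection_norm_le(2))
    then show ?thesis by simp
  qed
  \<comment> \<open>the literals 0.01 and 0.99 are read as 1/10^2 and 99/10^2\<close>
  ultimately show ?thesis using norm_triangle_ineq2[of x q] unfolding power2_eq_square by linarith
qed

lemma almost_orthogonal_split:
  fixes L1 L2 :: "'a::euclidean_space set"
  assumes "almost_orthogonal L1 L2" "p \<in> dir L1"
  obtains x m where "p = x + m" "x \<in> dir L1" "m \<in> dir L1 \<inter> dir L2"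
    "\<forall>w\<in>dir L2. 0.99 * norm x \<le> norm (x - w)"
proof -
  obtain vs :: "nat \<Rightarrow> 'a" and a b c where ab: "a \<le> b" "b \<le> c"
    and U: "dir L1 = span (vs ` {..<b})" and W: "dir L2 = span (vs ` {a..<c})"
    and perp: "\<forall>u\<in>span (vs ` {..<a}). u \<noteq> 0 \<longrightarrow> near_perp (plane_angle u L2)"
    using assms(1) unfolding almost_orthogonal_def orthonormal_basis_of_def by metis
  have sub: "{..<a} \<subseteq> {..<b}" "{a..<b} \<subseteq> {..<b}" "{a..<b} \<subseteq> {a..<c}"
    using ab by auto
  have "{..<b} = {..<a} \<union> {a..<b}" using ab by auto
  then have "p \<in> span (vs ` {..<a} \<union> vs ` {a..<b})" using assms(2) U by (simp add: image_Un)
  then obtain x m where x: "x \<in> span (vs ` {..<a})" and m: "m \<in> span (vs ` {a..<b})"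
    and "p = x + m"
    unfolding span_Un by blast
  moreover have "x \<in> dir L1" using x U span_mono[OF image_mono[OF sub(1)]] by blast
  moreover have "m \<in> dir L1 \<inter> dir L2"
    using m U W span_mono[OF image_mono[OF sub(2)]] span_mono[OF image_mono[OF sub(3)]] by blast
  moreover have "0.99 * norm x \<le> norm (x - w)" if "w \<in> dir L2" for w
  proof (cases "x = 0")
    case False
    then have "near_perp (plane_angle x L2)" using perp x by blast
    moreover have "subspace (dir L2)" using W by simp
    ultimately show ?thesis using near_perp_imp_dist_ge that by blast
  qed simp
  ultimately show ?thesis using that by blast
qed

lemma dist_common_direction_le:
  fixes v p1 p2 x m :: "'a::euclidean_space"
  assumes "subspace W" "p1 \<in> U" "\<forall>u\<in>U. (v - p1) \<bullet> u = 0" "p2 \<in> W"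
    and "p1 = x + m" "x \<in> U" "m \<in> W" "\<forall>w\<in>W. c * norm x \<le> norm (x - w)" "0 < c"
    and "norm (v - p1) \<le> e" "norm (v - p2) \<le> e"
  shows "norm (v - m) \<le> sqrt (1 + (2 / c)\<^sup>2) * e"
proof -
  have "c * norm x \<le> norm (x - (p2 - m))" using assms(1,4,7,8) by (simp add: subspace_diff)
  also have "\<dots> = norm ((v - p2) - (v - p1))" using assms(5) by (simp add: algebra_simps)
  also have "\<dots> \<le> 2 * e" using norm_triangle_ineq4[of "v - p2" "v - p1"] assms(10,11) by linarith
  finally have "norm x \<le> 2 / c * e" using assms(9) by (simp add: field_simps)
  then have "(norm x)\<^sup>2 \<le> (2 / c * e)\<^sup>2" by (rule power_mono) auto
  moreover have "(norm (v - p1))\<^sup>2 \<le> e\<^sup>2" using assms(10) by (rule power_mono) auto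
  moreover have "(norm (v - m))\<^sup>2 = (norm x)\<^sup>2 + (norm (v - p1))\<^sup>2"
    using norm_add_Pythagorean[of x "v - p1"] assms(3,5,6) by (simp add: orthogonal_def inner_commute)
  moreover have "(2 / c * e)\<^sup>2 = (2 / c)\<^sup>2 * e\<^sup>2" by (rule power_mult_distrib)
  ultimately have "(norm (v - m))\<^sup>2 \<le> (1 + (2 / c)\<^sup>2) * e\<^sup>2" by (simp add: distrib_right)
  then have "norm (v - m) \<le> sqrt ((1 + (2 / c)\<^sup>2) * e\<^sup>2)" by (rule real_le_rsqrt)
  moreover have "0 \<le> e" using assms(10) norm_ge_zero order_trans by blast
  ultimately show ?thesis by (simp add: real_sqrt_mult)
qed

lemma x_le_two_sin_x:
  fixes x :: real
  assumes "0 \<le> x" "x \<le> pi/2"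
  shows "x \<le> 2 * sin x"
proof -
  have "\<bar>sin x - x\<bar> \<le> x ^ 3 / 6"
    using Maclaurin_sin_bound[of x 3] assms(1)
    by (simp add: sin_coeff_def numeral_3_eq_3 lessThan_Suc fact_numeral)
  moreover have "x ^ 3 \<le> 3 * x"
  proof -
    have "x \<le> 1.6" using assms(2) pi_approx(2) by simp
    then have "x * x \<le> 1.6 * 1.6" using assms(1) by (intro mult_mono) auto
    then have "x * (x * x) \<le> x * 3" using assms(1) by (intro mult_left_mono) auto
    then show ?thesis by (simp add: power3_eq_cube power2_eq_square)
  qed
  ultimately show ?thesis unfolding abs_le_iff by linarith
qed

lemma vec_angle_le_dist:
  fixes v m :: "'a::euclidean_space"
  assumes "v \<noteq> 0" "norm (v - m) < norm v"
  shows "vec_angle v m \<le> 2 * (norm (v - m) / norm v)"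
proof -
  have nv: "0 < norm v" "0 < norm m" using assms by auto
  define t where "t = (v \<bullet> m) / (norm v * norm m)"
  define \<theta> where "\<theta> = vec_angle v m"
  have t: "-1 \<le> t" "t \<le> 1"
    using Cauchy_Schwarz_ineq2[of v m] nv by (simp_all add: t_def field_simps abs_le_iff)
  have cos: "cos \<theta> = t" using cos_arccos[OF t] by (simp add: \<theta>_def vec_angle_def t_def)
  have dist: "(norm (v - m))\<^sup>2 = (norm v)\<^sup>2 + (norm m)\<^sup>2 - 2 * (v \<bullet> m)"
    by (simp add: power2_norm_eq_inner inner_diff_left inner_diff_right inner_commute)
  have "(norm (v - m))\<^sup>2 < (norm v)\<^sup>2" using assms(2) by (rule power_strict_mono) auto
  then have "0 < v \<bullet> m" using dist nv(2) by (smt (verit) zero_less_power2)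
  then have "0 \<le> \<theta>" "\<theta> \<le> pi/2"
    using arccos_bounded[OF t] arccos_le_pi2[OF _ t(2)] nv
    by (simp_all add: \<theta>_def vec_angle_def t_def)
  have "v \<bullet> m = norm v * norm m * cos \<theta>" using cos nv by (simp add: t_def)
  moreover have "(norm v * sin \<theta>)\<^sup>2 = (norm v)\<^sup>2 - (norm v * cos \<theta>)\<^sup>2"
    by (simp add: power_mult_distrib sin_squared_eq algebra_simps)
  ultimately have "(norm (v - m))\<^sup>2 - (norm v * sin \<theta>)\<^sup>2 = (norm m - norm v * cos \<theta>)\<^sup>2"
    using dist by (simp add: power2_eq_square algebra_simps)
  then have "(norm v * sin \<theta>)\<^sup>2 \<le> (norm (v - m))\<^sup>2" by (smt (verit) zero_le_power2)
  then have "norm v * sin \<theta> \<le> norm (v - m)" by (rule power2_le_imp_le) simp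
  then have "sin \<theta> \<le> norm (v - m) / norm v" using nv by (simp add: field_simps)
  moreover have "\<theta> \<le> 2 * sin \<theta>" using x_le_two_sin_x \<open>0 \<le> \<theta>\<close> \<open>\<theta> \<le> pi/2\<close> by blast
  ultimately show ?thesis unfolding \<theta>_def by linarith
qed

lemma almost_orthogonal_common_direction_close:
  fixes v :: "'a::euclidean_space"
  assumes "is_plane L1" "is_plane L2" "almost_orthogonal L1 L2" "v \<noteq> 0"
    and "plane_angle v L1 \<le> ereal \<alpha>" "plane_angle v L2 \<le> ereal \<alpha>" "0 \<le> \<alpha>" "\<alpha> \<le> pi/2"
  obtains m where "m \<in> dir L1 \<inter> dir L2" "norm (v - m) \<le> 2.3 * \<alpha> * norm v"
proof -
  have sub: "subspace (dir L1)" "subspace (dir L2)" using assms(1,2) by (simp_all add: subspace_dir)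
  obtain p1 where p1: "p1 \<in> dir L1" "\<forall>w\<in>dir L1. (v - p1) \<bullet> w = 0"
    by (rule orthogonal_projection_exists[OF sub(1)])
  obtain p2 where p2: "p2 \<in> dir L2" "\<forall>w\<in>dir L2. (v - p2) \<bullet> w = 0"
    by (rule orthogonal_projection_exists[OF sub(2)])
  obtain x m where xm: "p1 = x + m" "x \<in> dir L1" "m \<in> dir L1 \<inter> dir L2"
    "\<forall>w\<in>dir L2. 0.99 * norm x \<le> norm (x - w)"
    by (rule almost_orthogonal_split[OF assms(3) p1(1)])
  have e1: "norm (v - p1) \<le> sin \<alpha> * norm v"
    using plane_angle_le_imp_dist_projection[OF assms(4) p1 assms(5,8)] .
  have e2: "norm (v - p2) \<le> sin \<alpha> * norm v"
    using plane_angle_le_imp_dist_projection[OF assms(4) p2 assms(6,8)] .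
  have "norm (v - m) \<le> sqrt (1 + (2 / 0.99)\<^sup>2) * (sin \<alpha> * norm v)"
  proof (rule dist_common_direction_le[OF sub(2) p1 p2(1) xm(1,2) _ xm(4) _ e1 e2])
    show "m \<in> dir L2" using xm(3) by blast
  qed simp
  also have "\<dots> \<le> 2.3 * (\<alpha> * norm v)"
  proof (rule mult_mono)
    show "sqrt (1 + (2 / 0.99)\<^sup>2) \<le> 2.3" by (rule real_le_lsqrt) (simp_all add: power2_eq_square)
    show "sin \<alpha> * norm v \<le> \<alpha> * norm v" using sin_x_le_x[OF assms(7)] by (rule mult_right_mono) simp
    show "0 \<le> sin \<alpha> * norm v" using assms(7,8) pi_gt3 by (simp add: sin_ge_zero)
  qed simp
  finally show ?thesis using that xm(3) by simp
qed

theorem lemma5: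
  fixes L1 L2 :: "'a::euclidean_space set" and v :: 'a and \<alpha> :: real
  assumes "is_plane L1" and "is_plane L2"
    and "almost_orthogonal L1 L2"
    and "L1 \<inter> L2 \<noteq> {}"
    and "v \<noteq> 0"
    and "0 < \<alpha>" and "\<alpha> \<le> 1/3"
    and "plane_angle v L1 \<le> ereal \<alpha>" and "plane_angle v L2 \<le> ereal \<alpha>"
  shows "plane_angle v (L1 \<inter> L2) \<le> ereal (10 * \<alpha>)"
proof -
  have "0 \<le> \<alpha>" "\<alpha> \<le> pi/2" using assms(6,7) pi_gt3 by simp_all
  obtain m where m: "m \<in> dir L1 \<inter> dir L2" "norm (v - m) \<le> 2.3 * \<alpha> * norm v"
    by (rule almost_orthogonal_common_direction_close[OF assms(1-3,5,8,9) \<open>0 \<le> \<alpha>\<close> \<open>\<alpha> \<le> pi/2\<close>])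
  have "2.3 * \<alpha> * norm v < 1 * norm v" using assms(5,7) by (intro mult_strict_right_mono) auto
  then have "norm (v - m) < norm v" using m(2) by linarith
  have "vec_angle v m \<le> 2 * (norm (v - m) / norm v)"
    using vec_angle_le_dist[OF assms(5) \<open>norm (v - m) < norm v\<close>] .
  also have "\<dots> \<le> 10 * \<alpha>"
  proof -
    have "norm (v - m) / norm v \<le> 2.3 * \<alpha>" using m(2) assms(5) by (simp add: field_simps)
    then show ?thesis using assms(6) by linarith
  qed
  finally have "ereal (vec_angle v m) \<le> ereal (10 * \<alpha>)" by simp
  moreover have "m \<in> dir (L1 \<inter> L2)" using m(1) dir_Int[of L1 L2] assms(1,2,4) by (simp add: is_plane_def)
  moreover have "m \<noteq> 0" using \<open>norm (v - m) < norm v\<close> by auto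
  ultimately show ?thesis using plane_angle_le_vec_angle order_trans by blast
qed

end
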